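(* Let $k\ge 2$ be an integer and suppose $l$ is the minimal size of an alphabet over which there exists an infinite $k$th-power-free word. Then: (1) for every alphabet $\Sigma$ with $|\Sigma|\le l-1$ and every antimorphic involution $\theta$ on $\Sigma^*$, there is no infinite word over $\Sigma$ that is pseudo-$k$th-power-free with respect to $\theta$; and (2) for every finite alphabet $\Sigma'$ and every antimorphic involution $\theta$ on $\Sigma'^*$ with $|\operatorname{Trn}(\theta)|\ge l$, there is an infinite word over $\Sigma'$ that is pseudo-$k$th-power-free with respect to $\theta$.
   Context: Alphabets are totally ordered (letters $0,1,2,\dots$). A $k$th power is a word $u^k$ with $u$ nonempty; a word is $k$th-power-free if none of its factors (contiguous subwords) is a $k$th power. A function $\theta:\Sigma^*\to\Sigma^*$ is an antimorphic involution if $\theta(uv)=\theta(v)\theta(u)$ and $\theta(\theta(w))=w$. $\operatorname{Trn}(\theta)=\{a\in\Sigma:\theta(a)>a\}$. A nonempty word $w$ is a pseudo $k$th power with respect to $\theta$ if $w=u_1\cdots u_k$ where for all $1\le i,j\le k$, $u_i=u_j$ or $u_i=\theta(u_j)$; a word is pseudo-$k$th-power-free if no factor of it is a pseudo $k$th power. *)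

theory Defs
  imports Main
begin

definition alphabet :: "nat \<Rightarrow> nat set" where
  "alphabet n = {0..<n}"

definition kpow :: "nat list \<Rightarrow> nat \<Rightarrow> nat list" where
  "kpow u k = concat (replicate k u)"

definition is_kth_power :: "nat \<Rightarrow> nat list \<Rightarrow> bool" where
  "is_kth_power k x \<longleftrightarrow> (\<exists>u. u \<noteq> [] \<and> x = kpow u k)"

definition inf_factor :: "(nat \<Rightarrow> nat) \<Rightarrow> nat \<Rightarrow> nat \<Rightarrow> nat list" where
  "inf_factor w i j = map w [i..<j]"

definition inf_word_over :: "nat set \<Rightarrow> (nat \<Rightarrow> nat) \<Rightarrow> bool" where
  "inf_word_over \<Sigma> w \<longleftrightarrow> (\<forall>i. w i \<in> \<Sigma>)"

definition inf_kth_power_free :: "nat \<Rightarrow> (nat \<Rightarrow> nat) \<Rightarrow> bool" where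
  "inf_kth_power_free k w \<longleftrightarrow> (\<forall>i j. \<not> is_kth_power k (inf_factor w i j))"

text \<open>Antimorphic involution on \<Sigma>^*: theta is given as a function on all nat lists,
but only its behaviour on words over \<Sigma> is constrained (and used).\<close>
definition antimorphic_involution :: "nat set \<Rightarrow> (nat list \<Rightarrow> nat list) \<Rightarrow> bool" where
  "antimorphic_involution \<Sigma> \<theta> \<longleftrightarrow>
     (\<forall>w\<in>lists \<Sigma>. \<theta> w \<in> lists \<Sigma>) \<and>
     (\<forall>u\<in>lists \<Sigma>. \<forall>v\<in>lists \<Sigma>. \<theta> (u @ v) = \<theta> v @ \<theta> u) \<and>
     (\<forall>w\<in>lists \<Sigma>. \<theta> (\<theta> w) = w)"

definition Trn :: "nat set \<Rightarrow> (nat list \<Rightarrow> nat list) \<Rightarrow> nat set" where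
  "Trn \<Sigma> \<theta> = {a \<in> \<Sigma>. \<exists>b. \<theta> [a] = [b] \<and> a < b}"

definition is_pseudo_kth_power :: "(nat list \<Rightarrow> nat list) \<Rightarrow> nat \<Rightarrow> nat list \<Rightarrow> bool" where
  "is_pseudo_kth_power \<theta> k x \<longleftrightarrow> x \<noteq> [] \<and>
     (\<exists>us. length us = k \<and> concat us = x \<and>
        (\<forall>i<k. \<forall>j<k. us ! i = us ! j \<or> us ! i = \<theta> (us ! j)))"

definition inf_pseudo_kth_power_free :: "(nat list \<Rightarrow> nat list) \<Rightarrow> nat \<Rightarrow> (nat \<Rightarrow> nat) \<Rightarrow> bool" where
  "inf_pseudo_kth_power_free \<theta> k w \<longleftrightarrow>
     (\<forall>i j. \<not> is_pseudo_kth_power \<theta> k (inf_factor w i j))"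

end

theory Submission
  imports Defs
begin

text \<open>Every $k$th power is a pseudo $k$th power, so pseudo-$k$th-power-freeness is the stronger
property and part (1) follows from the minimality of $l$. Conversely, $\theta$ maps each letter
of $\operatorname{Trn}(\theta)$ to a letter outside $\operatorname{Trn}(\theta)$, so on a word over
$\operatorname{Trn}(\theta)$ the image $\theta(u)$ of a nonempty block never again lies over
$\operatorname{Trn}(\theta)$; a pseudo $k$th power over $\operatorname{Trn}(\theta)$ is therefore
an ordinary $k$th power. Hence any $k$th-power-free word over $l$ letters, recoded injectively
into $\operatorname{Trn}(\theta)$, is pseudo-$k$th-power-free, which gives part (2).\<close>

lemma kth_power_imp_pseudo_kth_power:
  assumes "0 < k" and "is_kth_power k x"
  shows "is_pseudo_kth_power \<theta> k x"
proof -
  obtain u where u: "u \<noteq> []" "x = kpow u k"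
    using assms(2) unfolding is_kth_power_def by blast
  show ?thesis
    unfolding is_pseudo_kth_power_def
  proof (intro conjI exI[of _ "replicate k u"])
    show "x \<noteq> []" using u assms(1) by (simp add: kpow_def)
  qed (use u in \<open>auto simp: kpow_def\<close>)
qed

lemma inf_pseudo_kth_power_free_imp_kth_power_free:
  assumes "0 < k" and "inf_pseudo_kth_power_free \<theta> k w"
  shows "inf_kth_power_free k w"
  using assms kth_power_imp_pseudo_kth_power
  unfolding inf_pseudo_kth_power_free_def inf_kth_power_free_def by blast

lemma kth_power_map_inj_on:
  assumes "is_kth_power k (map f x)" and "inj_on f (set x)"
  shows "is_kth_power k x"
proof -
  obtain u where u: "u \<noteq> []" "map f x = kpow u k"
    using assms(1) unfolding is_kth_power_def by blast
  let ?g = "inv_into (set x) f"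
  have "x = map ?g (map f x)"
    using assms(2) by (simp add: map_idI)
  also have "\<dots> = kpow (map ?g u) k"
    using u(2) by (simp add: kpow_def map_concat)
  finally show ?thesis
    using u(1) unfolding is_kth_power_def by blast
qed

lemma inf_kth_power_free_comp_inj_on:
  assumes "inf_kth_power_free k v" and "inj_on f (range v)"
  shows "inf_kth_power_free k (f \<circ> v)"
  unfolding inf_kth_power_free_def
proof (intro allI notI)
  fix i j
  assume "is_kth_power k (inf_factor (f \<circ> v) i j)"
  then have "is_kth_power k (map f (inf_factor v i j))"
    by (simp add: inf_factor_def)
  moreover have "inj_on f (set (inf_factor v i j))"
    using assms(2) by (rule inj_on_subset) (auto simp: inf_factor_def)
  ultimately have "is_kth_power k (inf_factor v i j)"
    by (rule kth_power_map_inj_on)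
  then show False
    using assms(1) unfolding inf_kth_power_free_def by blast
qed

lemma antimorphic_involution_Nil:
  assumes "antimorphic_involution \<Sigma> \<theta>"
  shows "\<theta> [] = []"
proof -
  have "\<theta> ([] @ []) = \<theta> [] @ \<theta> []"
    using assms unfolding antimorphic_involution_def by blast
  then show ?thesis by simp
qed

lemma Trn_subset: "Trn \<Sigma> \<theta> \<subseteq> \<Sigma>"
  unfolding Trn_def by blast

lemma antimorphic_involution_Trn_letter:
  assumes ai: "antimorphic_involution \<Sigma> \<theta>" and a: "a \<in> Trn \<Sigma> \<theta>"
  obtains b where "\<theta> [a] = [b]" and "b \<notin> Trn \<Sigma> \<theta>"
proof -
  obtain b where b: "\<theta> [a] = [b]" "a < b" and "a \<in> \<Sigma>"
    using a unfolding Trn_def by blast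
  then have "\<theta> [b] = [a]"
    using ai unfolding antimorphic_involution_def by (metis lists.Cons lists.Nil)
  with b have "b \<notin> Trn \<Sigma> \<theta>"
    unfolding Trn_def by auto
  with b(1) that show thesis by blast
qed

lemma antimorphic_involution_not_in_lists_Trn:
  assumes ai: "antimorphic_involution \<Sigma> \<theta>"
    and "u \<noteq> []" and u: "u \<in> lists (Trn \<Sigma> \<theta>)"
  shows "\<theta> u \<notin> lists (Trn \<Sigma> \<theta>)"
proof -
  obtain u' a where ua: "u = u' @ [a]"
    using \<open>u \<noteq> []\<close> by (metis rev_exhaust)
  then have a: "a \<in> Trn \<Sigma> \<theta>" and "u' \<in> lists \<Sigma>" and "[a] \<in> lists \<Sigma>"
    using u Trn_subset by auto
  then have "\<theta> u = \<theta> [a] @ \<theta> u'"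
    using ai ua unfolding antimorphic_involution_def by blast
  moreover obtain b where "\<theta> [a] = [b]" "b \<notin> Trn \<Sigma> \<theta>"
    using antimorphic_involution_Trn_letter[OF ai a] .
  ultimately show ?thesis by auto
qed

lemma pseudo_kth_power_over_Trn_imp_kth_power:
  assumes ai: "antimorphic_involution \<Sigma> \<theta>"
    and x: "x \<in> lists (Trn \<Sigma> \<theta>)" and "is_pseudo_kth_power \<theta> k x"
  shows "is_kth_power k x"
proof -
  obtain us where "x \<noteq> []" and len: "length us = k" and cat: "concat us = x"
    and blocks: "\<forall>i<k. \<forall>j<k. us ! i = us ! j \<or> us ! i = \<theta> (us ! j)"
    using assms(3) unfolding is_pseudo_kth_power_def by blast
  then have "0 < k" by (cases k) auto
  have over_Trn: "us ! i \<in> lists (Trn \<Sigma> \<theta>)" if "i < k" for i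
    using that len cat x by (auto dest!: nth_mem)
  have "us ! 0 \<noteq> []"
  proof
    assume "us ! 0 = []"
    then have "\<forall>i<k. us ! i = []"
      using blocks \<open>0 < k\<close> antimorphic_involution_Nil[OF ai] by metis
    then have "concat us = []"
      using len by (auto simp: in_set_conv_nth)
    with cat \<open>x \<noteq> []\<close> show False by simp
  qed
  have "\<theta> (us ! 0) \<notin> lists (Trn \<Sigma> \<theta>)"
    using antimorphic_involution_not_in_lists_Trn[OF ai \<open>us ! 0 \<noteq> []\<close> over_Trn[OF \<open>0 < k\<close>]] .
  then have "us ! i = us ! 0" if "i < k" for i
    using blocks over_Trn[OF that] that \<open>0 < k\<close> by metis
  then have "us = replicate k (us ! 0)"
    using len by (metis in_set_conv_nth replicate_eqI)
  with cat \<open>us ! 0 \<noteq> []\<close> show ?thesis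
    unfolding is_kth_power_def kpow_def by metis
qed

lemma inf_pseudo_kth_power_free_over_Trn:
  assumes "antimorphic_involution \<Sigma> \<theta>"
    and "inf_word_over (Trn \<Sigma> \<theta>) w" and "inf_kth_power_free k w"
  shows "inf_pseudo_kth_power_free \<theta> k w"
  using assms pseudo_kth_power_over_Trn_imp_kth_power
  unfolding inf_pseudo_kth_power_free_def inf_kth_power_free_def inf_word_over_def inf_factor_def
  by (metis (no_types, lifting) ex_map_conv in_listsI)

theorem mainTheorem12:
  fixes k l :: nat
  assumes "k \<ge> 2"
    and "\<exists>w. inf_word_over (alphabet l) w \<and> inf_kth_power_free k w"
    and "\<forall>n<l. \<not> (\<exists>w. inf_word_over (alphabet n) w \<and> inf_kth_power_free k w)"
  shows "(\<forall>n \<theta>. n \<le> l - 1 \<longrightarrow> antimorphic_involution (alphabet n) \<theta> \<longrightarrow>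
            \<not> (\<exists>w. inf_word_over (alphabet n) w \<and> inf_pseudo_kth_power_free \<theta> k w))
       \<and> (\<forall>m \<theta>. antimorphic_involution (alphabet m) \<theta> \<longrightarrow>
            card (Trn (alphabet m) \<theta>) \<ge> l \<longrightarrow>
            (\<exists>w. inf_word_over (alphabet m) w \<and> inf_pseudo_kth_power_free \<theta> k w))"
proof (intro conjI allI impI notI)
  fix n \<theta>
  assume "n \<le> l - 1" and "\<exists>w. inf_word_over (alphabet n) w \<and> inf_pseudo_kth_power_free \<theta> k w"
  then obtain w where w: "inf_word_over (alphabet n) w" "inf_pseudo_kth_power_free \<theta> k w"
    by blast
  then have "n \<noteq> 0"
    unfolding inf_word_over_def alphabet_def by auto
  with \<open>n \<le> l - 1\<close> have "n < l" by simp
  moreover have "inf_kth_power_free k w"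
    using assms(1) w(2) by (intro inf_pseudo_kth_power_free_imp_kth_power_free) simp_all
  ultimately show False
    using assms(3) w(1) by blast
next
  fix m \<theta>
  assume ai: "antimorphic_involution (alphabet m) \<theta>" and "card (Trn (alphabet m) \<theta>) \<ge> l"
  moreover have "finite (Trn (alphabet m) \<theta>)"
    using Trn_subset finite_subset unfolding alphabet_def by blast
  ultimately obtain f where f: "f ` {0..<l} \<subseteq> Trn (alphabet m) \<theta>" "inj_on f {0..<l}"
    using card_le_inj[of "{0..<l}" "Trn (alphabet m) \<theta>"] by auto
  obtain v where v: "inf_word_over (alphabet l) v" "inf_kth_power_free k v"
    using assms(2) by blast
  then have "range v \<subseteq> {0..<l}"
    unfolding inf_word_over_def alphabet_def by blast
  then have "inf_word_over (Trn (alphabet m) \<theta>) (f \<circ> v)" and "inf_kth_power_free k (f \<circ> v)"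
    using f v(2) inf_kth_power_free_comp_inj_on inj_on_subset
    unfolding inf_word_over_def by fastforce+
  then show "\<exists>w. inf_word_over (alphabet m) w \<and> inf_pseudo_kth_power_free \<theta> k w"
    using ai Trn_subset inf_pseudo_kth_power_free_over_Trn
    unfolding inf_word_over_def by blast
qed

end
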